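(* Let $(a,b)$ be an open interval with $0\in(a,b)$, let $n\ge 2$ be an integer and $C\ge 0$ a constant, and let $f\in C^\infty(a,b)$ (real or complex valued) satisfy $$|f^{(n)}(x)|\le C\sum_{k=0}^{n-1}\frac{|f^{(k)}(x)|}{|x|^{n-k}},\qquad x\in(a,b)\setminus\{0\}.$$ If $f\not\equiv 0$ on $(a,b)$, then $f$ has finite vanishing order $N$ at $0$, i.e. there is an integer $N\ge 0$ with $f^{(j)}(0)=0$ for all $0\le j<N$ and $f^{(N)}(0)\neq 0$ (so $f(x)=a_Nx^N+O(x^{N+1})$ near $0$ with $a_N\neq 0$), and moreover $$N\le B_nC+n-1,\qquad B_n=\sum_{k=0}^{n-1}\frac{1}{k!}.$$ *)

theory Defs
  imports "HOL-Analysis.Analysis"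
begin

fun nth_deriv :: "nat \<Rightarrow> (real \<Rightarrow> 'a::real_normed_vector) \<Rightarrow> real \<Rightarrow> 'a" where
  "nth_deriv 0 f = f"
| "nth_deriv (Suc k) f = (\<lambda>x. vector_derivative (nth_deriv k f) (at x))"

definition smooth_on :: "real set \<Rightarrow> (real \<Rightarrow> 'a::real_normed_vector) \<Rightarrow> bool" where
  "smooth_on S f \<longleftrightarrow> (\<forall>k. \<forall>x\<in>S. nth_deriv k f differentiable (at x))"

end

theory Submission
  imports Defs
begin

(* Fix x in S and follow the derivatives along the segment
   w*x, 0 < w <= 1.  A "radial bound" |g(w x)| <= H (w|x|)^p on the (k+1)-st
   derivative integrates, by the mean value inequality, to a bound H/(p+1) with
   exponent p+1 on the k-th one when g^(k)(0) = 0.  Starting from a bound of order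
   |y|^(M-n) on f^(n) (compactness plus M-n integrations), integrating down to the
   lower derivatives and inserting them into the inequality reproduces the bound
   with H replaced by theta*H, theta = C B_n/(M-n+1) < 1.  Iterating gives f^(n) = 0
   along the segment and hence f(x) = 0.  The theorem follows: f is not identically
   zero, so some derivative at 0 is nonzero, and the least such index N cannot
   exceed B_n C + n - 1. *)

lemma smooth_on_has_vector_derivative:
  assumes "smooth_on S f" "s \<in> S"
  shows "(nth_deriv k f has_vector_derivative nth_deriv (Suc k) f s) (at s)"
  using assms unfolding smooth_on_def by (simp add: vector_derivative_works[symmetric])

lemma smooth_on_continuous_on:
  assumes "smooth_on S f"
  shows "continuous_on S (nth_deriv k f)"
  using assms unfolding smooth_on_def
  by (meson continuous_at_imp_continuous_on differentiable_imp_continuous_within)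

lemma convex_scaled_mem:
  fixes S :: "real set"
  assumes "convex S" "0 \<in> S" "x \<in> S" "u \<in> {0..1}"
  shows "u * x \<in> S"
  using convexD[OF assms(1) assms(2) assms(3), of "1 - u" u] assms(4) by simp

lemma smooth_on_continuous_on_segment:
  fixes S :: "real set"
  assumes "smooth_on S f" "convex S" "0 \<in> S" "x \<in> S"
  shows "continuous_on {0..1} (\<lambda>u. nth_deriv k f (u * x))"
proof -
  have "continuous_on {0..1} (nth_deriv k f \<circ> (\<lambda>u. u * x))"
    using smooth_on_continuous_on[OF assms(1)] convex_scaled_mem[OF assms(2-4)]
    by (intro continuous_on_compose continuous_intros) (meson continuous_on_subset image_subsetI)
  then show ?thesis by (simp add: o_def)
qed

definition radial_bound :: "(real \<Rightarrow> 'a::real_normed_vector) \<Rightarrow> real \<Rightarrow> real \<Rightarrow> nat \<Rightarrow> bool" where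
  "radial_bound g x H p \<longleftrightarrow> (\<forall>w\<in>{0<..1}. norm (g (w * x)) \<le> H * (w * \<bar>x\<bar>) ^ p)"

lemma radial_bound_integrate_once:
  fixes f :: "real \<Rightarrow> 'a::real_normed_vector" and S :: "real set"
  assumes sm: "smooth_on S f" and S: "convex S" "0 \<in> S" and x: "x \<in> S"
    and zero: "nth_deriv k f 0 = 0"
    and bound: "radial_bound (nth_deriv (Suc k) f) x A p"
  shows "radial_bound (nth_deriv k f) x (A / Suc p) (Suc p)"
  unfolding radial_bound_def
proof
  fix w :: real assume w: "w \<in> {0<..1}"
  define y where "y = w * x"
  have y: "y \<in> S" unfolding y_def using convex_scaled_mem[OF S x] w by auto
  have abs_y: "\<bar>y\<bar> = w * \<bar>x\<bar>" unfolding y_def using w by (simp add: abs_mult)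
  define F where "F = (\<lambda>u. nth_deriv k f (u * y))"
  define Phi where "Phi = (\<lambda>u::real. A / Suc p * \<bar>y\<bar> ^ Suc p * u ^ Suc p)"
  have "norm (F 1 - F 0) \<le> Phi 1 - Phi 0"
  proof (rule differentiable_bound_general[where f' = "\<lambda>u. y *\<^sub>R nth_deriv (Suc k) f (u * y)"
        and \<phi>' = "\<lambda>u. A * \<bar>y\<bar> ^ Suc p * u ^ p"])
    show "(0::real) < 1" by simp
    show "continuous_on {0..1} F"
      unfolding F_def by (rule smooth_on_continuous_on_segment[OF sm S y])
    show "continuous_on {0..1} Phi" unfolding Phi_def by (intro continuous_intros)
  next
    fix u :: real assume u: "0 < u" "u < 1"
    have uy: "u * y \<in> S" using convex_scaled_mem[OF S y] u by auto
    have "((\<lambda>u. u * y) has_vector_derivative y) (at u)"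
      by (auto intro!: derivative_eq_intros simp: has_real_derivative_iff_has_vector_derivative[symmetric])
    from vector_diff_chain_at[OF this smooth_on_has_vector_derivative[OF sm uy, of k]]
    show "(F has_vector_derivative y *\<^sub>R nth_deriv (Suc k) f (u * y)) (at u)"
      unfolding F_def by (simp add: o_def)
    have "(Phi has_field_derivative A * \<bar>y\<bar> ^ Suc p * u ^ p) (at u)"
      unfolding Phi_def by (rule derivative_eq_intros refl | simp)+
    then show "(Phi has_vector_derivative A * \<bar>y\<bar> ^ Suc p * u ^ p) (at u)"
      using has_real_derivative_iff_has_vector_derivative by blast
    have uw: "u * w \<in> {0<..1}" using u w by (auto simp: mult_le_one)
    have "norm (y *\<^sub>R nth_deriv (Suc k) f (u * y)) = \<bar>y\<bar> * norm (nth_deriv (Suc k) f ((u * w) * x))"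
      by (simp add: y_def mult.assoc)
    also have "\<dots> \<le> \<bar>y\<bar> * (A * ((u * w) * \<bar>x\<bar>) ^ p)"
      using bound uw unfolding radial_bound_def by (intro mult_left_mono) auto
    also have "\<dots> = A * \<bar>y\<bar> ^ Suc p * u ^ p"
      by (simp add: abs_y power_mult_distrib mult_ac)
    finally show "norm (y *\<^sub>R nth_deriv (Suc k) f (u * y)) \<le> A * \<bar>y\<bar> ^ Suc p * u ^ p" .
  qed
  then show "norm (nth_deriv k f (w * x)) \<le> A / Suc p * (w * \<bar>x\<bar>) ^ Suc p"
    using zero unfolding F_def Phi_def y_def[symmetric] abs_y[symmetric] by simp
qed

lemma radial_bound_integrate:
  fixes f :: "real \<Rightarrow> 'a::real_normed_vector" and S :: "real set"
  assumes sm: "smooth_on S f" and S: "convex S" "0 \<in> S" and x: "x \<in> S"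
    and zeros: "\<And>j. j < m \<Longrightarrow> nth_deriv (k + j) f 0 = 0"
    and bound: "radial_bound (nth_deriv (k + m) f) x A p"
  shows "radial_bound (nth_deriv k f) x (A * fact p / fact (p + m)) (p + m)"
  using zeros bound
proof (induction m arbitrary: k)
  case 0
  then show ?case by simp
next
  case (Suc m)
  have "radial_bound (nth_deriv (Suc k) f) x (A * fact p / fact (p + m)) (p + m)"
  proof (rule Suc.IH)
    show "nth_deriv (Suc k + j) f 0 = 0" if "j < m" for j
      using Suc.prems(1)[of "Suc j"] that by simp
  qed (use Suc.prems(2) in simp)
  then have "radial_bound (nth_deriv k f) x (A * fact p / fact (p + m) / Suc (p + m)) (Suc (p + m))"
    using Suc.prems(1)[of 0] by (intro radial_bound_integrate_once[OF sm S x]) auto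
  moreover have "A * fact p / fact (p + m) / Suc (p + m) = A * fact p / fact (p + Suc m)"
    by (simp add: field_simps)
  ultimately show ?case by (simp only: add_Suc_right)
qed

text \<open>If the derivatives k, ..., k+m-1 vanish at 0, the k-th derivative is O(|y|^m) along
  each segment (the (k+m)-th derivative being bounded there by compactness).\<close>
lemma radial_bound_exists:
  fixes f :: "real \<Rightarrow> 'a::real_normed_vector" and S :: "real set"
  assumes sm: "smooth_on S f" and S: "convex S" "0 \<in> S" and x: "x \<in> S"
    and zeros: "\<And>j. j < m \<Longrightarrow> nth_deriv (k + j) f 0 = 0"
  shows "\<exists>H\<ge>0. radial_bound (nth_deriv k f) x H m"
proof -
  have "compact ((\<lambda>u. nth_deriv (k + m) f (u * x)) ` {0..1})"
    by (intro compact_continuous_image smooth_on_continuous_on_segment[OF sm S x]) auto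
  then obtain K where K: "\<And>u. u \<in> {0..1} \<Longrightarrow> norm (nth_deriv (k + m) f (u * x)) \<le> K"
    by (meson bounded_iff compact_imp_bounded image_eqI)
  have "radial_bound (nth_deriv (k + m) f) x (max K 0) 0"
    unfolding radial_bound_def using K by (force intro: order_trans[OF _ max.cobounded1])
  from radial_bound_integrate[OF sm S x zeros this]
  show ?thesis by (intro exI[of _ "max K 0 / fact m"]) auto
qed

text \<open>The coefficient estimate behind the constant B_n: for n \<le> M,
  sum_{k<n} (M-n)!/(M-k)! \<le> B_n / (M-n+1).\<close>
lemma sum_fact_ratio_le:
  fixes M n :: nat
  assumes "n \<le> M"
  shows "(\<Sum>k<n. fact (M - n) / fact (M - k) :: real) \<le> (\<Sum>k<n. 1 / fact k) / (M - n + 1)"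
proof -
  have "fact (M - n) / fact (M - k) \<le> 1 / fact (n - Suc k) / (M - n + 1 :: real)"
    if k: "k < n" for k
  proof -
    have "fact (Suc (M - n)) * fact (n - Suc k) dvd (fact (Suc (M - n) + (n - Suc k)) :: nat)"
      by (rule fact_fact_dvd_fact)
    moreover have "Suc (M - n) + (n - Suc k) = M - k" using k assms by auto
    ultimately have "fact (Suc (M - n)) * fact (n - Suc k) \<le> (fact (M - k) :: nat)"
      by (metis dvd_imp_le fact_gt_zero)
    then have "real (Suc (M - n)) * fact (M - n) * fact (n - Suc k) \<le> (fact (M - k) :: real)"
      by (metis fact_Suc of_nat_fact of_nat_le_iff of_nat_mult)
    moreover have "real (Suc (M - n)) = real M - real n + 1" using assms by (simp add: of_nat_diff)
    ultimately show ?thesis using assms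
      by (simp add: divide_le_eq le_divide_eq of_nat_diff mult_ac add_ac)
  qed
  then have "(\<Sum>k<n. fact (M - n) / fact (M - k) :: real)
      \<le> (\<Sum>k<n. 1 / fact (n - Suc k) / (M - n + 1 :: real))"
    by (intro sum_mono) auto
  also have "\<dots> = (\<Sum>k<n. 1 / fact (n - Suc k)) / (M - n + 1 :: real)"
    by (simp add: sum_divide_distrib)
  also have "(\<Sum>k<n. 1 / fact (n - Suc k) :: real) = (\<Sum>k<n. 1 / fact k)"
    by (rule sum.nat_diff_reindex)
  finally show ?thesis .
qed

text \<open>Feeding a radial bound of order M-n on the n-th derivative through the lower derivatives
  and the differential inequality improves its constant by the factor C B_n / (M-n+1).\<close>
lemma radial_bound_contract:
  fixes f :: "real \<Rightarrow> 'a::real_normed_vector" and S :: "real set"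
  assumes sm: "smooth_on S f" and S: "convex S" "0 \<in> S" and x: "x \<in> S" "x \<noteq> 0"
    and C: "C \<ge> 0"
    and ineq: "\<And>y. y \<in> S \<Longrightarrow> y \<noteq> 0 \<Longrightarrow>
           norm (nth_deriv n f y) \<le> C * (\<Sum>k<n. norm (nth_deriv k f y) / \<bar>y\<bar> ^ (n - k))"
    and nM: "n \<le> M" and zeros: "\<And>j. j < M \<Longrightarrow> nth_deriv j f 0 = 0"
    and H: "H \<ge> 0" and bound: "radial_bound (nth_deriv n f) x H (M - n)"
  shows "radial_bound (nth_deriv n f) x (C * (\<Sum>k<n. 1 / fact k) / (M - n + 1) * H) (M - n)"
  unfolding radial_bound_def
proof
  fix w :: real assume w: "w \<in> {0<..1}"
  define y where "y = w * x"
  have y: "y \<in> S" "y \<noteq> 0" unfolding y_def using convex_scaled_mem[OF S x(1)] w x by auto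
  have abs_y: "\<bar>y\<bar> = w * \<bar>x\<bar>" unfolding y_def using w by (simp add: abs_mult)
  have lower: "norm (nth_deriv k f y) / \<bar>y\<bar> ^ (n - k) \<le> H * (fact (M - n) / fact (M - k)) * \<bar>y\<bar> ^ (M - n)"
    if k: "k < n" for k
  proof -
    have "radial_bound (nth_deriv k f) x (H * fact (M - n) / fact (M - n + (n - k))) (M - n + (n - k))"
      using zeros k nM bound by (intro radial_bound_integrate[OF sm S x(1)]) auto
    moreover have "M - n + (n - k) = M - k" using k nM by simp
    ultimately have "norm (nth_deriv k f (w * x)) \<le> H * (fact (M - n) / fact (M - k)) * (w * \<bar>x\<bar>) ^ (M - k)"
      using w unfolding radial_bound_def by auto
    then have "norm (nth_deriv k f y) \<le> H * (fact (M - n) / fact (M - k)) * \<bar>y\<bar> ^ (M - k)"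
      unfolding y_def[symmetric] abs_y[symmetric] .
    moreover have "\<bar>y\<bar> ^ (M - k) = \<bar>y\<bar> ^ (M - n) * \<bar>y\<bar> ^ (n - k)"
      using k nM by (simp flip: power_add)
    ultimately show ?thesis using y(2) by (simp add: divide_le_eq mult_ac)
  qed
  have "norm (nth_deriv n f y) \<le> C * (\<Sum>k<n. norm (nth_deriv k f y) / \<bar>y\<bar> ^ (n - k))"
    by (rule ineq[OF y])
  also have "\<dots> \<le> C * (\<Sum>k<n. H * (fact (M - n) / fact (M - k)) * \<bar>y\<bar> ^ (M - n))"
    using lower C by (intro mult_left_mono sum_mono) auto
  also have "\<dots> = C * H * \<bar>y\<bar> ^ (M - n) * (\<Sum>k<n. fact (M - n) / fact (M - k))"
    by (simp add: sum_distrib_left sum_distrib_right mult_ac)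
  also have "\<dots> \<le> C * H * \<bar>y\<bar> ^ (M - n) * ((\<Sum>k<n. 1 / fact k) / (M - n + 1))"
    using sum_fact_ratio_le[OF nM] C H by (intro mult_left_mono) auto
  finally show "norm (nth_deriv n f (w * x))
      \<le> C * (\<Sum>k<n. 1 / fact k) / (M - n + 1) * H * (w * \<bar>x\<bar>) ^ (M - n)"
    by (simp add: y_def[symmetric] abs_y[symmetric] mult_ac)
qed

lemma le_zero_if_le_geometric:
  fixes z c \<theta> :: real
  assumes "0 \<le> \<theta>" "\<theta> < 1" and le: "\<And>i. z \<le> \<theta> ^ i * c"
  shows "z \<le> 0"
proof -
  have "(\<lambda>i. \<theta> ^ i * c) \<longlonglongrightarrow> 0 * c"
    using assms by (intro tendsto_mult_right LIMSEQ_power_zero) auto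
  then show ?thesis using le by (intro LIMSEQ_le_const[where X = "\<lambda>i. \<theta> ^ i * c"]) auto
qed

lemma high_vanishing_order_imp_zero:
  fixes f :: "real \<Rightarrow> 'a::real_normed_vector" and S :: "real set"
  assumes sm: "smooth_on S f" and S: "convex S" "0 \<in> S"
    and n: "n \<ge> 1" and C: "C \<ge> 0"
    and ineq: "\<And>y. y \<in> S \<Longrightarrow> y \<noteq> 0 \<Longrightarrow>
           norm (nth_deriv n f y) \<le> C * (\<Sum>k<n. norm (nth_deriv k f y) / \<bar>y\<bar> ^ (n - k))"
    and zeros: "\<And>j. j < M \<Longrightarrow> nth_deriv j f 0 = 0"
    and M: "(\<Sum>k<n. 1 / fact k) * C + real n - 1 < real M"
    and x: "x \<in> S"
  shows "f x = 0"
proof -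
  define B where "B = (\<Sum>k<n. 1 / fact k :: real)"
  define \<theta> where "\<theta> = C * B / (M - n + 1)"
  have BC: "0 \<le> B * C" unfolding B_def using C by (intro mult_nonneg_nonneg sum_nonneg) auto
  then have nM: "n \<le> M" using M unfolding B_def by linarith
  have "B * C < real (M - n) + 1" using M nM unfolding B_def by (simp add: of_nat_diff)
  then have \<theta>: "0 \<le> \<theta>" "\<theta> < 1"
    using BC C nM by (auto simp: \<theta>_def divide_less_eq mult.commute)
  show ?thesis
  proof (cases "x = 0")
    case True
    then show ?thesis using zeros[of 0] n nM by simp
  next
    case False
    obtain H where H: "H \<ge> 0" "radial_bound (nth_deriv n f) x H (M - n)"
      using radial_bound_exists[OF sm S x, of "M - n" n] zeros by auto
    have iter: "radial_bound (nth_deriv n f) x (\<theta> ^ i * H) (M - n)" for i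
    proof (induction i)
      case (Suc i)
      have "0 \<le> \<theta> ^ i * H" using H \<theta> by simp
      from radial_bound_contract[OF sm S x False C ineq nM zeros this Suc]
      show ?case unfolding B_def[symmetric] \<theta>_def[symmetric] by (simp add: mult.assoc)
    qed (use H in simp)
    have "radial_bound (nth_deriv n f) x 0 (M - n)"
      unfolding radial_bound_def
    proof
      fix w :: real assume "w \<in> {0<..1}"
      then have "norm (nth_deriv n f (w * x)) \<le> \<theta> ^ i * (H * (w * \<bar>x\<bar>) ^ (M - n))" for i
        using iter[of i] unfolding radial_bound_def by (simp add: mult.assoc)
      then have "norm (nth_deriv n f (w * x)) \<le> 0" by (rule le_zero_if_le_geometric[OF \<theta>])
      then show "norm (nth_deriv n f (w * x)) \<le> 0 * (w * \<bar>x\<bar>) ^ (M - n)" by simp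
    qed
    then have "radial_bound (nth_deriv 0 f) x (0 * fact (M - n) / fact (M - n + n)) (M - n + n)"
      using zeros nM by (intro radial_bound_integrate[OF sm S x]) auto
    then have "norm (nth_deriv 0 f (1 * x)) \<le> 0"
      unfolding radial_bound_def by (force dest: bspec[where x = 1])
    then show ?thesis by simp
  qed
qed

theorem lemma8:
  fixes f :: "real \<Rightarrow> complex" and a b C :: real and n :: nat
  assumes "a < 0" and "0 < b"
    and "n \<ge> 2" and "C \<ge> 0"
    and "smooth_on {a<..<b} f"
    and "\<And>x. x \<in> {a<..<b} \<Longrightarrow> x \<noteq> 0 \<Longrightarrow>
           norm (nth_deriv n f x) \<le> C * (\<Sum>k<n. norm (nth_deriv k f x) / \<bar>x\<bar> ^ (n - k))"
    and "\<exists>x\<in>{a<..<b}. f x \<noteq> 0"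
  shows "\<exists>N::nat. (\<forall>j<N. nth_deriv j f 0 = 0) \<and> nth_deriv N f 0 \<noteq> 0
           \<and> real N \<le> (\<Sum>k<n. 1 / fact k) * C + real n - 1"
proof -
  have S: "convex {a<..<b}" "0 \<in> {a<..<b}" using assms(1,2) by auto
  have n: "n \<ge> 1" using assms(3) by simp
  text \<open>f is not identically zero, so it cannot vanish to any order above the bound.\<close>
  have bounded_order: "real M \<le> (\<Sum>k<n. 1 / fact k) * C + real n - 1"
    if "\<And>j. j < M \<Longrightarrow> nth_deriv j f 0 = 0" for M
    using high_vanishing_order_imp_zero[OF assms(5) S n assms(4,6) that] assms(7) by force
  obtain N where N: "nth_deriv N f 0 \<noteq> 0"
  proof (rule ccontr)
    let ?M = "nat \<lceil>(\<Sum>k<n. 1 / fact k) * C + real n\<rceil>"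
    assume "\<not> thesis"
    then have "real ?M \<le> (\<Sum>k<n. 1 / fact k) * C + real n - 1"
      using that by (intro bounded_order) blast
    then show False using of_nat_ceiling[of "(\<Sum>k<n. 1 / fact k) * C + real n"] by linarith
  qed
  define N0 where "N0 = (LEAST j. nth_deriv j f 0 \<noteq> 0)"
  have "nth_deriv N0 f 0 \<noteq> 0" "\<forall>j<N0. nth_deriv j f 0 = 0"
    unfolding N0_def using LeastI[of "\<lambda>j. nth_deriv j f 0 \<noteq> 0", OF N] not_less_Least by auto
  then show ?thesis using bounded_order by blast
qed

end
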